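(* Let $F$ be a field and $t,p$ positive integers with $p\mid t$. Let $M$ be a $t\times t$ $(t,p)$ block invertible square matrix over $F$, let $X$ be a $p\times t$ matrix over $F$ that is block invertible with block size $p$, and let $Y$ be a $t\times p$ matrix over $F$ that is block invertible with block size $p$. Suppose $W$ is an invertible $p\times p$ matrix over $F$ such that $XM^{-1}Y+W$ is invertible. Then the $(t+p)\times(t+p)$ matrix $$N=\begin{pmatrix} M & Y\\ X & XM^{-1}Y+W\end{pmatrix}$$ is a $(t+p,p)$ block invertible square matrix. Moreover, for any such $M,X,Y$, an invertible $W$ with $XM^{-1}Y+W$ invertible exists provided $p>1$.
   Context: For positive integers $a,b,p$ with $p\mid a$ and $p\mid b$, an $a\times b$ matrix (with $a$ rows and $b$ columns) over $F$ is partitioned into $p\times p$ blocks $B_{i,j}$, where $B_{i,j}$ is the submatrix formed by rows $(i-1)p+1,\dots,ip$ and columns $(j-1)p+1,\dots,jp$. Such a matrix is called block invertible (with block size $p$) if every block $B_{i,j}$ is invertible. An $n\times n$ matrix is an $(n,p)$ block invertible square matrix if it is block invertible with block size $p$ and is itself invertible. *)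

theory Defs
  imports "Jordan_Normal_Form.Matrix"
begin

definition blk :: "'a mat \<Rightarrow> nat \<Rightarrow> nat \<Rightarrow> nat \<Rightarrow> 'a mat" where
  "blk A p i j = mat p p (\<lambda>(r, c). A $$ (i * p + r, j * p + c))"

definition block_invertible :: "nat \<Rightarrow> 'a :: semiring_1 mat \<Rightarrow> bool" where
  "block_invertible p A \<longleftrightarrow> p dvd dim_row A \<and> p dvd dim_col A \<and>
     (\<forall>i < dim_row A div p. \<forall>j < dim_col A div p. invertible_mat (blk A p i j))"

definition block_inv_square :: "nat \<Rightarrow> nat \<Rightarrow> 'a :: semiring_1 mat \<Rightarrow> bool" where
  "block_inv_square n p A \<longleftrightarrow> A \<in> carrier_mat n n \<and> block_invertible p A \<and> invertible_mat A"

definition mat_inv :: "'a :: semiring_1 mat \<Rightarrow> 'a mat" where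
  "mat_inv A = (SOME B. inverts_mat A B \<and> inverts_mat B A)"

end

theory Submission
  imports Defs "Jordan_Normal_Form.Determinant"
begin

(* Multiplying N from the left by the block matrix [[1, 0], [-X M^-1, 1]] (of determinant 1) clears
   the block X and leaves the Schur complement W in the corner, so det N = det M * det W and N is
   invertible. Every p x p block of N is a block of M, X or Y, or the corner X M^-1 Y + W, so all of
   them are invertible.

   For the existence of W it suffices that every n x n matrix S with n >= 2 is the difference of two
   invertible matrices S + W and W. Left multiplication by an invertible matrix does not affect this,
   so a row operation lets us assume S(0,0) = 0; writing S = [[0, B], [C, D]], the choice
   W = [[1, 0], [-C, W']] makes S + W block upper triangular with corner 1, which reduces the claim
   to D, i.e. to size n - 1. The base case n = 2 is an explicit computation. For n = 1 the claim
   fails over GF(2), which is why p > 1 is needed. *)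

lemma invertible_mat_iff_det_nonzero:
  fixes A :: "'a::field mat"
  assumes A: "A \<in> carrier_mat n n"
  shows "invertible_mat A \<longleftrightarrow> det A \<noteq> 0"
proof
  assume "invertible_mat A"
  then obtain B where AB: "A * B = 1\<^sub>m n" and BA: "B * A = 1\<^sub>m (dim_row B)"
    using A unfolding invertible_mat_def inverts_mat_def by auto
  have "B \<in> carrier_mat n n"
    using arg_cong[OF AB, of dim_col] arg_cong[OF BA, of dim_col] A by auto
  with AB A show "det A \<noteq> 0" using det_mult[OF A] by (metis det_one zero_neq_one mult_zero_left)
next
  assume "det A \<noteq> 0"
  from det_non_zero_imp_unit[OF A this, of undefined]
  obtain B where "B \<in> carrier_mat n n" "A * B = 1\<^sub>m n" "B * A = 1\<^sub>m n"
    unfolding Units_def ring_mat_def by auto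
  with A show "invertible_mat A"
    unfolding invertible_mat_def inverts_mat_def by auto
qed

lemma mat_inv:
  assumes A: "A \<in> carrier_mat n n" and "invertible_mat A"
  shows "mat_inv A \<in> carrier_mat n n" and "mat_inv A * A = 1\<^sub>m n" and "A * mat_inv A = 1\<^sub>m n"
proof -
  have "inverts_mat A (mat_inv A) \<and> inverts_mat (mat_inv A) A"
    using assms(2) unfolding invertible_mat_def mat_inv_def by (metis (mono_tags) someI)
  then have AB: "A * mat_inv A = 1\<^sub>m n" and BA: "mat_inv A * A = 1\<^sub>m (dim_row (mat_inv A))"
    using A unfolding inverts_mat_def by auto
  show B: "mat_inv A \<in> carrier_mat n n"
    using arg_cong[OF AB, of dim_col] arg_cong[OF BA, of dim_col] A by auto
  show "mat_inv A * A = 1\<^sub>m n" "A * mat_inv A = 1\<^sub>m n" using AB BA B by auto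
qed

lemma det_four_block_mat_Schur:
  fixes M :: "'a::idom mat"
  assumes M: "M \<in> carrier_mat n n" and Mi: "Mi \<in> carrier_mat n n" and MiM: "Mi * M = 1\<^sub>m n"
    and Y: "Y \<in> carrier_mat n m" and X: "X \<in> carrier_mat m n" and D: "D \<in> carrier_mat m m"
  shows "det (four_block_mat M Y X D) = det M * det (D - X * Mi * Y)"
proof -
  define L where "L = four_block_mat (1\<^sub>m n) (0\<^sub>m n m) (- (X * Mi)) (1\<^sub>m m)"
  have XMi: "X * Mi \<in> carrier_mat m n" using X Mi by auto
  have "- (X * Mi) * M + X = - (X * (Mi * M)) + X"
    using X Mi M by (simp add: assoc_mult_mat)
  also have "\<dots> = 0\<^sub>m m n" using X MiM by simp
  finally have lower_left: "- (X * Mi) * M + X = 0\<^sub>m m n" .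
  have lower_right: "- (X * Mi) * Y + D = D - X * Mi * Y"
    using XMi Y D by (subst comm_add_mat[of _ m m]) (auto simp: minus_add_uminus_mat)
  have "L * four_block_mat M Y X D = four_block_mat M Y (0\<^sub>m m n) (D - X * Mi * Y)"
    unfolding L_def
    by (subst mult_four_block_mat[OF one_carrier_mat zero_carrier_mat uminus_carrier_mat[OF XMi]
          one_carrier_mat M Y X D]) (use M X Y D in \<open>simp add: lower_left lower_right\<close>)
  moreover have "det L = 1"
    unfolding L_def by (subst det_four_block_mat_upper_right_zero[of _ n _ m]) (use XMi in auto)
  moreover have "L \<in> carrier_mat (n + m) (n + m)" unfolding L_def by auto
  ultimately have "det (four_block_mat M Y X D) = det (four_block_mat M Y (0\<^sub>m m n) (D - X * Mi * Y))"
    using det_mult[of L "n + m" "four_block_mat M Y X D"] M D by simp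
  also have "\<dots> = det M * det (D - X * Mi * Y)"
    using M Y D XMi by (intro det_four_block_mat_lower_left_zero) (auto intro!: minus_carrier_mat)
  finally show ?thesis .
qed

lemma block_index_less_iff: "(a :: nat) < p \<Longrightarrow> i * p + a < k * p \<longleftrightarrow> i < k"
proof
  assume "a < p" "i * p + a < k * p"
  then show "i < k" by (metis le_add1 le_less_trans mult_less_cancel2)
next
  assume "a < p" "i < k"
  then have "i * p + a < Suc i * p" by simp
  also have "\<dots> \<le> k * p" using \<open>i < k\<close> by (intro mult_right_mono) auto
  finally show "i * p + a < k * p" .
qed

lemma block_index_diff: "(k :: nat) \<le> i \<Longrightarrow> i * p + a - k * p = (i - k) * p + a"
  by (simp add: diff_mult_distrib)

lemma block_index_bound:
  assumes "(i :: nat) < k + m div p" and "p dvd m"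
  shows "i * p + p \<le> k * p + m"
proof -
  have "Suc i * p \<le> (k + m div p) * p" using assms(1) by (intro mult_right_mono) auto
  then show ?thesis using assms(2) by (simp add: add_mult_distrib)
qed

lemma blk_four_block_mat:
  assumes "A \<in> carrier_mat (k * p) (l * p)" and "D \<in> carrier_mat m n"
    and "i * p + p \<le> k * p + m" and "j * p + p \<le> l * p + n"
  shows "blk (four_block_mat A B C D) p i j =
    (if i < k then if j < l then blk A p i j else blk B p i (j - l)
     else if j < l then blk C p (i - k) j else blk D p (i - k) (j - l))"
  by (rule eq_matI) (use assms in \<open>auto simp: blk_def block_index_less_iff block_index_diff\<close>)

lemma blk_self: "A \<in> carrier_mat p p \<Longrightarrow> blk A p 0 0 = A"
  unfolding blk_def by (rule eq_matI) auto

lemma block_invertible_four_block_mat: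
  assumes A: "A \<in> carrier_mat (k * p) (l * p)" and D: "D \<in> carrier_mat m n"
    and B: "B \<in> carrier_mat (k * p) n" and C: "C \<in> carrier_mat m (l * p)"
    and "block_invertible p A" "block_invertible p B" "block_invertible p C" "block_invertible p D"
  shows "block_invertible p (four_block_mat A B C D)"
  unfolding block_invertible_def
proof (intro conjI allI impI)
  have "p dvd m" "p dvd n" using assms unfolding block_invertible_def by auto
  then show "p dvd dim_row (four_block_mat A B C D)" "p dvd dim_col (four_block_mat A B C D)"
    using A D by auto
  fix i j
  assume i: "i < dim_row (four_block_mat A B C D) div p"
    and j: "j < dim_col (four_block_mat A B C D) div p"
  then have "0 < p" by (cases "p = 0") auto
  have "i < k + m div p" "j < l + n div p"
    using i j A D \<open>0 < p\<close> by (simp_all add: div_add_self1 add.commute)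
  then have "i * p + p \<le> k * p + m" "j * p + p \<le> l * p + n"
    using block_index_bound \<open>p dvd m\<close> \<open>p dvd n\<close> by blast+
  from blk_four_block_mat[OF A D this]
  show "invertible_mat (blk (four_block_mat A B C D) p i j)"
    using assms(5-8) A B C D \<open>0 < p\<close> \<open>i < k + m div p\<close> \<open>j < l + n div p\<close>
    unfolding block_invertible_def by auto
qed

lemma block_invertible_if_invertible:
  assumes "A \<in> carrier_mat p p" and "invertible_mat A"
  shows "block_invertible p A"
  using assms blk_self[OF assms(1)] unfolding block_invertible_def
  by (cases "p = 0") auto

definition has_invertible_shift :: "nat \<Rightarrow> 'a::field mat \<Rightarrow> bool" where
  "has_invertible_shift n S \<longleftrightarrow> (\<exists>W \<in> carrier_mat n n. det W \<noteq> 0 \<and> det (S + W) \<noteq> 0)"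

lemma det_2x2:
  fixes A :: "'a::idom mat"
  assumes A: "A \<in> carrier_mat 2 2"
  shows "det A = A $$ (0,0) * A $$ (1,1) - A $$ (0,1) * A $$ (1,0)"
proof -
  obtain A1 A2 A3 A4 where s: "split_block A 1 1 = (A1, A2, A3, A4)"
    by (cases "split_block A 1 1") auto
  have "dim_row A = 1 + 1" "dim_col A = 1 + 1" using A by auto
  note blocks = split_block[OF s this]
  have "A3 * A4 = A4 * A3"
    using blocks by (intro eq_matI) (auto simp: scalar_prod_def)
  then have "det A = det (A1 * A4 - A2 * A3)"
    using det_four_block_mat[OF blocks(1-4)] blocks(5) by presburger
  also have "\<dots> = (A1 * A4 - A2 * A3) $$ (0,0)"
    using blocks by (intro det_single) auto
  also have "\<dots> = A $$ (0,0) * A $$ (1,1) - A $$ (0,1) * A $$ (1,0)"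
    using blocks s unfolding split_block_def Let_def by (auto simp: scalar_prod_def)
  finally show ?thesis .
qed

definition mat22 :: "'a::zero \<Rightarrow> 'a \<Rightarrow> 'a \<Rightarrow> 'a \<Rightarrow> 'a mat" where
  "mat22 a b c d = mat 2 2 (\<lambda>(i,j). if i = 0 then if j = 0 then a else b else if j = 0 then c else d)"

lemma mat22_carrier[simp]: "mat22 a b c d \<in> carrier_mat 2 2"
  unfolding mat22_def by auto

lemma det_mat22[simp]: "det (mat22 a b c (d::'a::idom)) = a * d - b * c"
  by (simp add: det_2x2 mat22_def)

lemma mat22_entries: "S \<in> carrier_mat 2 2 \<Longrightarrow> S = mat22 (S $$ (0,0)) (S $$ (0,1)) (S $$ (1,0)) (S $$ (1,1))"
  by (rule eq_matI) (auto simp: mat22_def less_2_cases_iff)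

lemma add_mat22[simp]: "mat22 a b c d + mat22 a' b' c' d' = mat22 (a + a') (b + b') (c + c') (d + d')"
  by (rule eq_matI) (auto simp: mat22_def less_2_cases_iff)

lemma has_invertible_shift_2x2:
  fixes S :: "'a::field mat"
  assumes "S \<in> carrier_mat 2 2"
  shows "has_invertible_shift 2 S"
proof -
  obtain a b c d where S: "S = mat22 a b c d" using mat22_entries[OF assms] by blast
  \<comment> \<open>In each case both det W and det (S + W) are 1 or -1.\<close>
  have "\<exists>W. det W \<noteq> 0 \<and> det (mat22 a b c d + W) \<noteq> 0 \<and> W \<in> carrier_mat 2 2"
  proof (cases "a = 0")
    case False
    show ?thesis
      using False by (intro exI[of _ "mat22 (- a) (1 - b) (1 - c) (- ((1 - b) * (1 - c) + 1) / a)"])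
        (auto simp: field_simps)
  next
    case a: True
    consider "b \<noteq> 0" | "b = 0" "c \<noteq> 0" | "b = 0" "c = 0" by blast
    then show ?thesis
    proof cases
      case 1
      then show ?thesis using a by (intro exI[of _ "mat22 1 0 (d / b - c) 1"]) (auto simp: field_simps)
    next
      case 2
      then show ?thesis using a by (intro exI[of _ "mat22 1 (d / c) 0 1"]) (auto simp: field_simps)
    next
      case 3
      then show ?thesis using a by (intro exI[of _ "mat22 0 1 1 1"]) auto
    qed
  qed
  then show ?thesis unfolding has_invertible_shift_def S by blast
qed

lemma has_invertible_shift_mult_left:
  fixes S P :: "'a::field mat"
  assumes S: "S \<in> carrier_mat n n" and P: "P \<in> carrier_mat n n" and "det P \<noteq> 0"
    and "has_invertible_shift n (P * S)"
  shows "has_invertible_shift n S"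
proof -
  obtain W where W: "W \<in> carrier_mat n n" "det W \<noteq> 0" "det (P * S + W) \<noteq> 0"
    using assms(4) unfolding has_invertible_shift_def by auto
  obtain Q where Q: "Q \<in> carrier_mat n n" and QP: "Q * P = 1\<^sub>m n"
    using det_non_zero_imp_unit[OF P \<open>det P \<noteq> 0\<close>, of undefined] unfolding Units_def ring_mat_def by auto
  have "det Q \<noteq> 0" using arg_cong[OF QP, of det] det_mult[OF Q P] by auto
  have "Q * (P * S + W) = Q * (P * S) + Q * W"
    using S P Q W by (intro mult_add_distrib_mat) auto
  also have "Q * (P * S) = (Q * P) * S"
    using S P Q by (simp add: assoc_mult_mat)
  finally have "S + Q * W = Q * (P * S + W)" using QP S by simp
  then have "det (S + Q * W) = det Q * det (P * S + W)"
    using det_mult[OF Q, of "P * S + W"] S P W by auto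
  then show ?thesis
    unfolding has_invertible_shift_def using \<open>det Q \<noteq> 0\<close> W Q det_mult[OF Q W(1)]
    by (intro bexI[of _ "Q * W"]) auto
qed

lemma row_operation_zero_corner:
  fixes S :: "'a::field mat"
  assumes S: "S \<in> carrier_mat n n" and "2 \<le> n"
  shows "\<exists>P \<in> carrier_mat n n. det P \<noteq> 0 \<and> (P * S) $$ (0,0) = 0"
proof (cases "S $$ (1,0) = 0")
  case True
  have "swaprows_mat n 0 1 * S = swaprows 0 1 S" using swaprows_mat[OF S, of 0 1] assms(2) by auto
  then show ?thesis
    using True det_swaprows_mat[of 0 n 1, where 'a='a] S assms(2)
    by (intro bexI[of _ "swaprows_mat n 0 1"]) auto
next
  case False
  define a where "a = - S $$ (0,0) / S $$ (1,0)"
  have "addrow_mat n a 0 1 * S = addrow a 0 1 S" using addrow_mat[OF S, of 1 a 0] assms(2) by auto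
  then show ?thesis
    using False det_addrow_mat[of 0 1 n a] S assms(2)
    by (intro bexI[of _ "addrow_mat n a 0 1"]) (auto simp: a_def)
qed

lemma has_invertible_shift_zero_corner:
  fixes S :: "'a::field mat"
  assumes S: "S \<in> carrier_mat (Suc n) (Suc n)" and "S $$ (0,0) = 0"
    and IH: "\<And>D :: 'a mat. D \<in> carrier_mat n n \<Longrightarrow> has_invertible_shift n D"
  shows "has_invertible_shift (Suc n) S"
proof -
  obtain A B C D where s: "split_block S 1 1 = (A, B, C, D)"
    by (cases "split_block S 1 1") auto
  have "dim_row S = 1 + n" "dim_col S = 1 + n" using S by auto
  note blocks = split_block[OF s this]
  obtain W' where W': "W' \<in> carrier_mat n n" "det W' \<noteq> 0" "det (D + W') \<noteq> 0"
    using IH[OF blocks(4)] unfolding has_invertible_shift_def by auto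
  define W where "W = four_block_mat (1\<^sub>m 1) (0\<^sub>m 1 n) (- C) W'"
  have W: "W \<in> carrier_mat (Suc n) (Suc n)" unfolding W_def using W' by auto
  have "det W = det W'" unfolding W_def
    using W' blocks by (subst det_four_block_mat_upper_right_zero[of _ 1 _ n]) auto
  have "A $$ (0,0) = 0" using s \<open>S $$ (0,0) = 0\<close> unfolding split_block_def Let_def by auto
  then have "det (A + 1\<^sub>m 1) = 1" using blocks by (subst det_single) auto
  have "S + W = four_block_mat (A + 1\<^sub>m 1) B (0\<^sub>m n 1) (D + W')"
    unfolding W_def blocks(5) using blocks W' by (subst add_four_block_mat[of _ 1 1 _ n _ n]) auto
  then have "det (S + W) = det (D + W')"
    using W' blocks \<open>det (A + 1\<^sub>m 1) = 1\<close> by (simp add: det_four_block_mat_lower_left_zero[of _ 1 _ n])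
  then show ?thesis
    unfolding has_invertible_shift_def using W \<open>det W = det W'\<close> W' by (intro bexI[of _ W]) auto
qed

lemma has_invertible_shift:
  fixes S :: "'a::field mat"
  assumes "2 \<le> n" and "S \<in> carrier_mat n n"
  shows "has_invertible_shift n S"
  using assms
proof (induction n arbitrary: S rule: nat_induct_at_least)
  case base
  then show ?case by (rule has_invertible_shift_2x2)
next
  case (Suc n)
  obtain P where P: "P \<in> carrier_mat (Suc n) (Suc n)" "det P \<noteq> 0" "(P * S) $$ (0,0) = 0"
    using row_operation_zero_corner[OF Suc.prems] Suc.hyps by auto
  have "has_invertible_shift (Suc n) (P * S)"
    using P Suc by (intro has_invertible_shift_zero_corner) auto
  then show ?case using has_invertible_shift_mult_left[OF Suc.prems P(1,2)] by blast
qed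

lemma block_inv_square_Schur_extension:
  fixes M :: "'a::field mat"
  assumes "p dvd t"
    and M: "block_inv_square t p M" and X: "X \<in> carrier_mat p t" and Y: "Y \<in> carrier_mat t p"
    and "block_invertible p X" and "block_invertible p Y"
    and W: "W \<in> carrier_mat p p" and "invertible_mat W"
    and "invertible_mat (X * mat_inv M * Y + W)"
  shows "block_inv_square (t + p) p (four_block_mat M Y X (X * mat_inv M * Y + W))"
proof -
  have Mc: "M \<in> carrier_mat t t" and "invertible_mat M" "block_invertible p M"
    using M unfolding block_inv_square_def by auto
  note Mi = mat_inv[OF this(1,2)]
  define D where "D = X * mat_inv M * Y + W"
  have Dc: "D \<in> carrier_mat p p" unfolding D_def using X Mi(1) Y W by auto
  have "D - X * mat_inv M * Y = W"
    unfolding D_def using X Mi(1) Y W by (intro eq_matI) auto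
  then have "det (four_block_mat M Y X D) = det M * det W"
    using det_four_block_mat_Schur[OF Mc Mi(1,2) Y X Dc] by simp
  then have "invertible_mat (four_block_mat M Y X D)"
    using Mc Dc W \<open>invertible_mat M\<close> \<open>invertible_mat W\<close>
    by (simp add: invertible_mat_iff_det_nonzero[of _ "t + p"] invertible_mat_iff_det_nonzero)
  moreover have "block_invertible p (four_block_mat M Y X D)"
    using Mc X Y Dc assms(5,6,9) \<open>block_invertible p M\<close> dvd_div_mult_self[OF \<open>p dvd t\<close>]
    by (intro block_invertible_four_block_mat[where k = "t div p" and l = "t div p"])
      (auto simp: D_def block_invertible_if_invertible)
  ultimately show ?thesis
    using Mc Dc unfolding block_inv_square_def D_def by auto
qed

theorem mainTheorem3:
  fixes M X Y :: "'a :: field mat" and t p :: nat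
  assumes "0 < t" and "0 < p" and "p dvd t"
    and "M \<in> carrier_mat t t" and "X \<in> carrier_mat p t" and "Y \<in> carrier_mat t p"
    and "block_inv_square t p M"
    and "block_invertible p X" and "block_invertible p Y"
  shows "(\<forall>W \<in> carrier_mat p p. invertible_mat W \<and> invertible_mat (X * mat_inv M * Y + W) \<longrightarrow>
            block_inv_square (t + p) p (four_block_mat M Y X (X * mat_inv M * Y + W)))
       \<and> (1 < p \<longrightarrow> (\<exists>W \<in> carrier_mat p p. invertible_mat W \<and> invertible_mat (X * mat_inv M * Y + W)))"
proof (intro conjI ballI impI)
  show "block_inv_square (t + p) p (four_block_mat M Y X (X * mat_inv M * Y + W))"
    if "W \<in> carrier_mat p p" and "invertible_mat W \<and> invertible_mat (X * mat_inv M * Y + W)" for W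
    using assms that by (intro block_inv_square_Schur_extension) auto
next
  assume "1 < p"
  have "invertible_mat M" using assms(7) unfolding block_inv_square_def by simp
  then have S: "X * mat_inv M * Y \<in> carrier_mat p p"
    using mat_inv(1)[OF assms(4)] assms(5,6) by auto
  then obtain W where "W \<in> carrier_mat p p" "det W \<noteq> 0" "det (X * mat_inv M * Y + W) \<noteq> 0"
    using has_invertible_shift[of p "X * mat_inv M * Y"] \<open>1 < p\<close>
    unfolding has_invertible_shift_def by auto
  then show "\<exists>W \<in> carrier_mat p p. invertible_mat W \<and> invertible_mat (X * mat_inv M * Y + W)"
    using S by (auto simp: invertible_mat_iff_det_nonzero[of _ p])
qed

end
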